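(* Let $h\ge 2$ and let $p_1,\dots,p_h$ be primes with $p_i\neq p_{i+1}$ for $i=1,\dots,h-1$. Then there are $\mathrm{CC}[p_1;\dots;p_h]$-circuits of size $2^{O(n^{1/(h-1)})}$ computing the $n$-ary conjunction $\mathrm{AND}_n$.
   Context: For an integer $m\ge 1$ and $A\subseteq\{0,\dots,m-1\}$, a gate $\mathrm{MOD}_m^A$ takes finitely many Boolean inputs (counted with multiplicity, as a wire may be connected several times) and outputs $1$ if their sum modulo $m$ lies in $A$, and $0$ otherwise. A $\mathrm{CC}[m_1;\dots;m_h]$-circuit is a Boolean circuit of depth $h$ in which every gate on level $i$ (level $1$ being fed by the inputs and level $h$ containing the output gate) is of the form $\mathrm{MOD}_{m_i}^A$ for some $A$ (possibly different for each gate), with multiple wires allowed. The size of a circuit is its number of gates. *)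

theory Defs
  imports Complex_Main "HOL-Computational_Algebra.Primes"
begin

text \<open>A MOD gate is given by its accepting set A and a multiplicity function w:
 w j is the number of wires from the j-th node of the previous level
 (the input variables, for level 1).\<close>
type_synonym gate = "nat set \<times> (nat \<Rightarrow> nat)"

definition eval_gate :: "nat \<Rightarrow> gate \<Rightarrow> bool list \<Rightarrow> bool" where
  "eval_gate m g vals =
     ((\<Sum>j<length vals. snd g j * (if vals ! j then 1 else 0)) mod m \<in> fst g)"

fun eval_levels :: "nat list \<Rightarrow> gate list list \<Rightarrow> bool list \<Rightarrow> bool list" where
  "eval_levels (m # ms) (L # Ls) vals = eval_levels ms Ls (map (\<lambda>g. eval_gate m g vals) L)"
| "eval_levels _ _ vals = vals"

definition is_CC_circuit :: "nat list \<Rightarrow> gate list list \<Rightarrow> bool" where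
  "is_CC_circuit ms C \<longleftrightarrow> length C = length ms \<and> C \<noteq> [] \<and>
     (\<forall>i<length C. C ! i \<noteq> [] \<and> (\<forall>g\<in>set (C ! i). fst g \<subseteq> {..<ms ! i})) \<and>
     length (last C) = 1"

definition circuit_size :: "gate list list \<Rightarrow> nat" where
  "circuit_size C = (\<Sum>L\<leftarrow>C. length L)"

definition circuit_output :: "nat list \<Rightarrow> gate list list \<Rightarrow> bool list \<Rightarrow> bool" where
  "circuit_output ms C x = hd (eval_levels ms C x)"

definition computes_AND :: "nat list \<Rightarrow> gate list list \<Rightarrow> nat \<Rightarrow> bool" where
  "computes_AND ms C n \<longleftrightarrow>
     (\<forall>x::bool list. length x = n \<longrightarrow> circuit_output ms C x = (\<forall>b\<in>set x. b))"

end

theory Submission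
  imports Defs "HOL-Number_Theory.Cong"
begin

(*
  Index the n \<le> m^(h-1) inputs in base m: for every k the indices fall into blocks of m^k
  consecutive numbers, and block b of size m^(k+1) is the union of the blocks b m + r, r < m.
  For 1 \<le> k < h, level k has one MOD_(p_k) gate for every block b of size m^k and every vector
  c of m residues mod p_k; it tests  \<Sum>_r c_r z_r = 1 (mod p_k),  where z_r says that the
  subblock b m + r contains a zero.  If some z_r holds, exactly p_k^(m-1) of the p_k^m vectors
  pass the test, otherwise none does.  So a MOD_(p_(k+1)) gate reading the gates of subblock
  b m + r with multiplicity c'_r sees p_k^(m-1) \<Sum>_r c'_r z'_r, and as p_k^(m-1) is invertible
  mod p_(k+1) it can perform the test of level k + 1.  The output gate adds up all of level
  h - 1, i.e. p_(h-1)^(m-1) times [some input is 0], and accepts iff this vanishes mod p_h.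
  Level k has m^(h-1-k) p_k^m gates, hence m = \<lceil>n^(1/(h-1))\<rceil> gives size 2^O(m).
*)

section \<open>Sums over blocks of consecutive indices\<close>

lemma sum_lessThan_mult:
  fixes g :: "nat \<Rightarrow> 'a::comm_monoid_add"
  shows "(\<Sum>j<M * K. g j) = (\<Sum>b<M. \<Sum>r<K. g (b * K + r))"
proof -
  have "sum g {b * K..<b * K + K} = (\<Sum>r<K. g (b * K + r))" for b
    using sum.shift_bounds_nat_ivl[of g 0 "b * K" K]
    by (simp add: atLeast0LessThan add.commute)
  then show ?thesis
    using sum.nat_group[of g K M] by simp
qed

lemma sum_lessThan_mult_single_block:
  fixes g :: "nat \<Rightarrow> 'a::comm_monoid_add"
  assumes "b < M" and "\<And>j. j div K \<noteq> b \<Longrightarrow> g j = 0"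
  shows "(\<Sum>j<M * K. g j) = (\<Sum>r<K. g (b * K + r))"
proof -
  have "(\<Sum>j<M * K. g j) = (\<Sum>b'<M. \<Sum>r<K. g (b' * K + r))"
    by (rule sum_lessThan_mult)
  also have "\<dots> = (\<Sum>b'<M. if b' = b then \<Sum>r<K. g (b * K + r) else 0)"
    using assms(2) by (intro sum.cong refl) (auto intro!: sum.neutral)
  also have "\<dots> = (\<Sum>r<K. g (b * K + r))"
    using assms(1) by simp
  finally show ?thesis .
qed

lemma sum_lessThan_pad:
  fixes g :: "nat \<Rightarrow> 'a::comm_monoid_add"
  assumes "n \<le> N"
  shows "(\<Sum>j<n. g j) = (\<Sum>j<N. if j < n then g j else 0)"
  using assms by (intro sum.mono_neutral_cong_left) auto

lemma sum_lessThan_add_mod: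
  fixes g :: "nat \<Rightarrow> 'a::comm_monoid_add"
  assumes "Q > 0"
  shows "(\<Sum>d<Q. g ((d + s) mod Q)) = (\<Sum>d<Q. g d)"
proof -
  have inj: "inj_on (\<lambda>d. (d + s) mod Q) {..<Q}"
  proof (rule inj_onI)
    fix d d' assume "d \<in> {..<Q}" "d' \<in> {..<Q}" "(d + s) mod Q = (d' + s) mod Q"
    then show "d = d'"
      using cong_add_rcancel_nat[of d s d' Q] by (simp add: cong_def)
  qed
  moreover have "(\<lambda>d. (d + s) mod Q) ` {..<Q} = {..<Q}"
    using inj assms by (intro endo_inj_surj) auto
  ultimately show ?thesis
    using sum.reindex_bij_betw[of "\<lambda>d. (d + s) mod Q" "{..<Q}" "{..<Q}" g]
    by (simp add: bij_betw_def)
qed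

section \<open>Counting solutions of a linear congruence\<close>

definition digit :: "nat \<Rightarrow> nat \<Rightarrow> nat \<Rightarrow> nat" where
  "digit Q c r = c div Q ^ r mod Q"

lemma digit_0: "d < Q \<Longrightarrow> digit Q (c * Q + d) 0 = d"
  by (simp add: digit_def)

lemma digit_Suc: "d < Q \<Longrightarrow> digit Q (c * Q + d) (Suc r) = digit Q c r"
  by (simp add: digit_def div_mult2_eq mult.commute)

definition digit_form :: "nat \<Rightarrow> nat \<Rightarrow> nat \<Rightarrow> (nat \<Rightarrow> bool) \<Rightarrow> nat" where
  "digit_form Q m c y = (\<Sum>r<m. digit Q c r * (if y r then 1 else 0))"

lemma digit_form_Suc:
  "d < Q \<Longrightarrow> digit_form Q (Suc m) (c * Q + d) y
     = d * (if y 0 then 1 else 0) + digit_form Q m c (\<lambda>r. y (Suc r))"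
  unfolding digit_form_def sum.lessThan_Suc_shift by (simp add: digit_0 digit_Suc)

lemma count_digit_form:
  assumes "Q > 0" and "a < Q"
  shows "(\<Sum>c<Q ^ m. if digit_form Q m c y mod Q = a then 1 else 0)
           = (if \<exists>r<m. y r then Q ^ (m - 1) else if a = 0 then Q ^ m else (0::nat))"
  using assms(2)
proof (induction m arbitrary: y a)
  case 0
  then show ?case by (simp add: digit_form_def)
next
  case (Suc m)
  let ?y' = "\<lambda>r. y (Suc r)"
  let ?F = "\<lambda>c. digit_form Q m c ?y'"
  have split: "(\<Sum>c<Q ^ Suc m. if digit_form Q (Suc m) c y mod Q = a then 1 else 0)
    = (\<Sum>c<Q ^ m. \<Sum>d<Q. if (d * (if y 0 then 1 else 0) + ?F c) mod Q = a then 1 else (0::nat))"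
    unfolding power_Suc2 sum_lessThan_mult by (intro sum.cong refl) (simp add: digit_form_Suc)
  show ?case
  proof (cases "y 0")
    case True
    have "(\<Sum>d<Q. if (d + ?F c) mod Q = a then 1 else (0::nat)) = 1" for c
      using sum_lessThan_add_mod[OF assms(1), of "\<lambda>d. if d = a then 1 else (0::nat)"] Suc.prems
      by simp
    then show ?thesis
      using split True by auto
  next
    case False
    have "(\<Sum>c<Q ^ Suc m. if digit_form Q (Suc m) c y mod Q = a then 1 else 0)
        = Q * (\<Sum>c<Q ^ m. if ?F c mod Q = a then 1 else (0::nat))"
      unfolding split using False by (simp add: sum_distrib_left mult.commute)
    also have "\<dots> = (if \<exists>r<m. ?y' r then Q ^ m else if a = 0 then Q ^ Suc m else 0)"
    proof (cases "\<exists>r<m. ?y' r")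
      case True
      then have "Q * Q ^ (m - 1) = Q ^ m"
        by (cases m) auto
      then show ?thesis using Suc.IH[of a ?y'] Suc.prems True by simp
    next
      case False
      then show ?thesis using Suc.IH[of a ?y'] Suc.prems by auto
    qed
    moreover have "(\<exists>r<Suc m. y r) \<longleftrightarrow> (\<exists>r<m. ?y' r)"
      using False by (auto simp: less_Suc_eq_0_disj)
    ultimately show ?thesis by (simp only: diff_Suc_1)
  qed
qed

section \<open>Blocks of inputs and the gates of one level\<close>

definition block_has_zero :: "nat \<Rightarrow> bool list \<Rightarrow> nat \<Rightarrow> nat \<Rightarrow> bool" where
  "block_has_zero m x k b \<longleftrightarrow> (\<exists>j<length x. j div m ^ k = b \<and> \<not> x ! j)"

lemma block_has_zero_0: "block_has_zero m x 0 j \<longleftrightarrow> j < length x \<and> \<not> x ! j"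
  unfolding block_has_zero_def by auto

lemma block_has_zero_Suc:
  assumes "m > 0"
  shows "block_has_zero m x (Suc k) b \<longleftrightarrow> (\<exists>r<m. block_has_zero m x k (b * m + r))"
proof -
  have div_eq_iff: "u div m = b \<longleftrightarrow> (\<exists>r<m. u = b * m + r)" for u
    using assms by (auto simp: mult.commute intro: exI[of _ "u mod m"])
  have "j div m ^ Suc k = b \<longleftrightarrow> (\<exists>r<m. j div m ^ k = b * m + r)" for j
    unfolding power_Suc2 div_mult2_eq div_eq_iff ..
  then show ?thesis
    unfolding block_has_zero_def by blast
qed

lemma block_has_zero_whole:
  assumes "length x \<le> m ^ k"
  shows "block_has_zero m x k 0 \<longleftrightarrow> \<not> (\<forall>b\<in>set x. b)"
  using assms unfolding block_has_zero_def all_set_conv_all_nth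
  by (auto simp: div_less)

(* Gate e of level k belongs to block e div p_k^m, and the base-p_k digits of e mod p_k^m are its
   coefficient vector. *)
definition gate_spec :: "(nat \<Rightarrow> nat) \<Rightarrow> nat \<Rightarrow> bool list \<Rightarrow> nat \<Rightarrow> nat \<Rightarrow> bool" where
  "gate_spec p m x k e \<longleftrightarrow>
     digit_form (p k) m (e mod p k ^ m)
       (\<lambda>r. block_has_zero m x (k - 1) (e div p k ^ m * m + r)) mod p k = 1"

lemma count_gate_spec_block:
  assumes "p k \<ge> 2" and "m > 0" and "k \<ge> 1"
  shows "(\<Sum>c<p k ^ m. if gate_spec p m x k (b * p k ^ m + c) then 1 else 0)
           = (if block_has_zero m x k b then p k ^ (m - 1) else (0::nat))"
proof -
  have "(\<Sum>c<p k ^ m. if gate_spec p m x k (b * p k ^ m + c) then 1 else (0::nat))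
      = (\<Sum>c<p k ^ m. if digit_form (p k) m c (\<lambda>r. block_has_zero m x (k - 1) (b * m + r))
                           mod p k = 1 then 1 else 0)"
    using assms(1) by (intro sum.cong refl) (simp add: gate_spec_def)
  also have "\<dots> = (if \<exists>r<m. block_has_zero m x (k - 1) (b * m + r) then p k ^ (m - 1) else 0)"
    using assms(1) by (simp add: count_digit_form)
  also have "(\<exists>r<m. block_has_zero m x (k - 1) (b * m + r)) \<longleftrightarrow> block_has_zero m x k b"
    using block_has_zero_Suc[OF assms(2), of x "k - 1" b] assms(3) by simp
  finally show ?thesis .
qed

(* Multiplicity of the wire from node j of the previous level into gate e, where the previous level
   has K consecutive nodes per subblock: K = 1 for the inputs, K = p_(k-1)^m for gates. *)
definition wiring :: "nat \<Rightarrow> nat \<Rightarrow> nat \<Rightarrow> nat \<Rightarrow> nat \<Rightarrow> nat" where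
  "wiring Q K m e j =
     (if j div K div m = e div Q ^ m then digit Q (e mod Q ^ m) (j div K mod m) else 0)"

lemma sum_wiring:
  assumes "e < M * Q ^ m" and "m > 0" and "K > 0"
  shows "(\<Sum>j<M * m * K. wiring Q K m e j * f j)
           = (\<Sum>r<m. digit Q (e mod Q ^ m) r * (\<Sum>i<K. f ((e div Q ^ m * m + r) * K + i)))"
proof -
  define b where "b = e div Q ^ m"
  have "b < M"
    using assms(1) by (simp add: b_def less_mult_imp_div_less)
  have "(\<Sum>j<M * m * K. wiring Q K m e j * f j)
      = (\<Sum>b'<M * m. wiring Q K m e (b' * K) * (\<Sum>i<K. f (b' * K + i)))"
    unfolding sum_lessThan_mult sum_distrib_left using assms(3)
    by (intro sum.cong refl) (simp add: wiring_def)
  also have "\<dots> = (\<Sum>r<m. wiring Q K m e ((b * m + r) * K) * (\<Sum>i<K. f ((b * m + r) * K + i)))"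
    using \<open>b < M\<close> assms(3) by (intro sum_lessThan_mult_single_block) (auto simp: wiring_def b_def)
  also have "\<dots> = (\<Sum>r<m. digit Q (e mod Q ^ m) r * (\<Sum>i<K. f ((b * m + r) * K + i)))"
    using assms(2,3) by (intro sum.cong refl) (simp add: wiring_def b_def)
  finally show ?thesis
    unfolding b_def .
qed

lemma mod_eq_add_pred_mod_iff:
  assumes "(Q::nat) \<ge> 2"
  shows "P mod Q = (P + Z + Q - 1) mod Q \<longleftrightarrow> Z mod Q = 1"
proof -
  have "P mod Q = (P + Z + Q - 1) mod Q \<longleftrightarrow> [P + (Z + (Q - 1)) = P + 0] (mod Q)"
    using assms by (auto simp: cong_def add.assoc)
  also have "\<dots> \<longleftrightarrow> [Z + (Q - 1) = 0] (mod Q)"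
    by (rule cong_add_lcancel_nat)
  also have "\<dots> \<longleftrightarrow> [Z + (Q - 1) = 1 + (Q - 1)] (mod Q)"
    using assms by (simp add: cong_def)
  also have "\<dots> \<longleftrightarrow> [Z = 1] (mod Q)"
    by (rule cong_add_rcancel_nat)
  also have "\<dots> \<longleftrightarrow> Z mod Q = 1"
    using assms by (simp add: cong_def)
  finally show ?thesis .
qed

(* Testing \<Sum>_r c_r x_r = \<Sum>_r c_r - 1 over the inputs present is testing \<Sum>_r c_r (\<not> x_r) = 1;
   the summand p 1 avoids truncated subtraction. *)
definition input_gate :: "(nat \<Rightarrow> nat) \<Rightarrow> nat \<Rightarrow> nat \<Rightarrow> nat \<Rightarrow> gate" where
  "input_gate p m n e =
     ({(digit_form (p 1) m (e mod p 1 ^ m) (\<lambda>r. e div p 1 ^ m * m + r < n) + p 1 - 1) mod p 1},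
      wiring (p 1) 1 m e)"

definition inner_gate :: "(nat \<Rightarrow> nat) \<Rightarrow> nat \<Rightarrow> nat \<Rightarrow> nat \<Rightarrow> gate" where
  "inner_gate p m k e = ({p (k - 1) ^ (m - 1) mod p k}, wiring (p k) (p (k - 1) ^ m) m e)"

definition output_gate :: gate where
  "output_gate = ({0}, \<lambda>_. 1)"

lemma eval_input_gate:
  assumes "p 1 \<ge> 2" and "m > 0" and "length x \<le> M * m" and "e < M * p 1 ^ m"
  shows "eval_gate (p 1) (input_gate p m (length x) e) x = gate_spec p m x 1 e"
proof -
  define Q c b where "Q = p 1" and "c = e mod Q ^ m" and "b = e div Q ^ m"
  define P where "P = digit_form Q m c (\<lambda>r. b * m + r < length x \<and> x ! (b * m + r))"
  define Z where "Z = digit_form Q m c (\<lambda>r. block_has_zero m x 0 (b * m + r))"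
  have "(\<Sum>j<length x. wiring Q 1 m e j * (if x ! j then 1 else 0))
      = (\<Sum>j<M * m * 1. wiring Q 1 m e j * (if j < length x \<and> x ! j then 1 else 0))"
    using assms(3) by (subst sum_lessThan_pad[of "length x" "M * m * 1"]) (auto intro: sum.cong)
  also have "\<dots> = P"
    using sum_wiring[of e M "p 1" m 1] assms(2,4)
    by (simp add: P_def digit_form_def Q_def b_def c_def)
  finally have weighted_sum: "(\<Sum>j<length x. wiring Q 1 m e j * (if x ! j then 1 else 0)) = P" .
  have "digit_form Q m c (\<lambda>r. b * m + r < length x) = P + Z"
    unfolding P_def Z_def digit_form_def block_has_zero_0 sum.distrib[symmetric]
    by (intro sum.cong refl) auto
  then have "eval_gate (p 1) (input_gate p m (length x) e) x \<longleftrightarrow> P mod Q = (P + Z + Q - 1) mod Q"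
    using weighted_sum by (simp add: eval_gate_def input_gate_def Q_def b_def c_def)
  also have "\<dots> \<longleftrightarrow> Z mod Q = 1"
    using assms(1) unfolding Q_def by (rule mod_eq_add_pred_mod_iff)
  finally show ?thesis
    by (simp add: gate_spec_def Z_def Q_def b_def c_def)
qed

lemma eval_inner_gate:
  assumes "p k \<ge> 2" and "p (Suc k) \<ge> 2" and "coprime (p k) (p (Suc k))"
    and "m > 0" and "k \<ge> 1"
    and "length v = M * m * p k ^ m" and "\<And>j. j < length v \<Longrightarrow> v ! j = gate_spec p m x k j"
    and "e < M * p (Suc k) ^ m"
  shows "eval_gate (p (Suc k)) (inner_gate p m (Suc k) e) v = gate_spec p m x (Suc k) e"
proof -
  define Q K c b where "Q = p (Suc k)" and "K = p k ^ m"
    and "c = e mod Q ^ m" and "b = e div Q ^ m"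
  let ?T = "p k ^ (m - 1)"
  define Z where "Z = digit_form Q m c (\<lambda>r. block_has_zero m x k (b * m + r))"
  have "K > 0"
    using assms(1) by (simp add: K_def)
  have "(\<Sum>j<length v. wiring Q K m e j * (if v ! j then 1 else 0))
      = (\<Sum>j<M * m * K. wiring Q K m e j * (if gate_spec p m x k j then 1 else 0))"
    using assms(6,7) by (intro sum.cong) (auto simp: K_def)
  also have "\<dots> = (\<Sum>r<m. digit Q c r * (if block_has_zero m x k (b * m + r) then ?T else 0))"
    using assms(1,4,5,8) \<open>K > 0\<close>
    by (simp add: sum_wiring count_gate_spec_block Q_def K_def b_def c_def)
  also have "\<dots> = ?T * Z"
    unfolding Z_def digit_form_def sum_distrib_left by (intro sum.cong refl) simp
  finally have weighted_sum: "(\<Sum>j<length v. wiring Q K m e j * (if v ! j then 1 else 0)) = ?T * Z" .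
  have "coprime ?T Q"
    using assms(3) by (simp add: Q_def)
  have "eval_gate (p (Suc k)) (inner_gate p m (Suc k) e) v \<longleftrightarrow> [?T * Z = ?T * 1] (mod Q)"
    using weighted_sum by (simp add: eval_gate_def inner_gate_def cong_def Q_def K_def)
  also have "\<dots> \<longleftrightarrow> [Z = 1] (mod Q)"
    using \<open>coprime ?T Q\<close> by (rule cong_mult_lcancel_nat)
  also have "\<dots> \<longleftrightarrow> Z mod Q = 1"
    using assms(2) by (simp add: cong_def Q_def)
  finally show ?thesis
    by (simp add: gate_spec_def Z_def Q_def b_def c_def)
qed

lemma eval_output_gate:
  assumes "p k \<ge> 2" and "p (Suc k) \<ge> 2" and "coprime (p k) (p (Suc k))"
    and "m > 0" and "k \<ge> 1" and "length x \<le> m ^ k"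
    and "length v = p k ^ m" and "\<And>j. j < length v \<Longrightarrow> v ! j = gate_spec p m x k j"
  shows "eval_gate (p (Suc k)) output_gate v \<longleftrightarrow> (\<forall>b\<in>set x. b)"
proof -
  have "(\<Sum>j<length v. if v ! j then 1 else 0)
      = (\<Sum>j<p k ^ m. if gate_spec p m x k j then 1 else (0::nat))"
    using assms(7,8) by (intro sum.cong) auto
  also have "\<dots> = (if \<forall>b\<in>set x. b then 0 else p k ^ (m - 1))"
    using count_gate_spec_block[of p k m x 0] assms(1,4,5,6) by (simp add: block_has_zero_whole)
  finally have count: "(\<Sum>j<length v. if v ! j then 1 else 0)
      = (if \<forall>b\<in>set x. b then 0 else p k ^ (m - 1))" .
  have "\<not> p (Suc k) dvd p k ^ (m - 1)"
  proof
    assume "p (Suc k) dvd p k ^ (m - 1)"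
    moreover have "coprime (p (Suc k)) (p k ^ (m - 1))"
      using assms(3) by (simp add: coprime_commute)
    ultimately have "is_unit (p (Suc k))"
      by (metis coprime_absorb_left)
    with assms(2) show False by simp
  qed
  then show ?thesis
    by (simp add: eval_gate_def output_gate_def count dvd_eq_mod_eq_0)
qed

definition level :: "(nat \<Rightarrow> nat) \<Rightarrow> nat \<Rightarrow> nat \<Rightarrow> nat \<Rightarrow> nat \<Rightarrow> gate list" where
  "level p h m n k =
     (if k = h then [output_gate]
      else map (if k = 1 then input_gate p m n else inner_gate p m k) [0..<m ^ (h - 1 - k) * p k ^ m])"

definition AND_circuit :: "(nat \<Rightarrow> nat) \<Rightarrow> nat \<Rightarrow> nat \<Rightarrow> nat \<Rightarrow> gate list list" where
  "AND_circuit p h m n = map (level p h m n) [1..<h + 1]"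

lemma eval_levels_append:
  "length ms = length C \<Longrightarrow> eval_levels (ms @ ms') (C @ C') v = eval_levels ms' C' (eval_levels ms C v)"
proof (induction ms arbitrary: C v)
  case (Cons m ms)
  then show ?case by (cases C) auto
qed simp

definition level_values :: "(nat \<Rightarrow> nat) \<Rightarrow> nat \<Rightarrow> nat \<Rightarrow> nat \<Rightarrow> bool list \<Rightarrow> nat \<Rightarrow> bool list" where
  "level_values p h m n x k = eval_levels (map p [1..<k + 1]) (map (level p h m n) [1..<k + 1]) x"

lemma level_values_Suc:
  "level_values p h m n x (Suc k)
     = map (\<lambda>g. eval_gate (p (Suc k)) g (level_values p h m n x k)) (level p h m n (Suc k))"
  unfolding level_values_def by (simp add: eval_levels_append)

lemma circuit_output_AND_circuit:
  assumes "h \<ge> 1"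
  shows "circuit_output (map p [1..<h + 1]) (AND_circuit p h m n) x
           = eval_gate (p h) output_gate (level_values p h m n x (h - 1))"
proof -
  have "h = Suc (h - 1)"
    using assms by simp
  then have "level_values p h m n x h = [eval_gate (p h) output_gate (level_values p h m n x (h - 1))]"
    using level_values_Suc[of p h m n x "h - 1"] by (simp add: level_def)
  then show ?thesis
    by (simp add: circuit_output_def AND_circuit_def level_values_def)
qed

lemma level_values_gate_spec:
  assumes moduli: "\<forall>i\<in>{1..h}. p i \<ge> 2" and coprime: "\<forall>i\<in>{1..<h}. coprime (p i) (p (i + 1))"
    and "m > 0" and "length x \<le> m ^ (h - 1)" and "1 \<le> k" and "k < h"
  shows "length (level_values p h m (length x) x k) = m ^ (h - 1 - k) * p k ^ m
    \<and> (\<forall>e < m ^ (h - 1 - k) * p k ^ m. level_values p h m (length x) x k ! e = gate_spec p m x k e)"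
  using \<open>1 \<le> k\<close> \<open>k < h\<close>
proof (induction k rule: nat_induct_at_least)
  case base
  let ?M = "m ^ (h - 1 - 1)"
  have "m ^ (h - 1) = ?M * m"
    using base power_minus_mult[of "h - 1" m] by simp
  then have "length x \<le> ?M * m"
    using assms(4) by simp
  moreover have "p 1 \<ge> 2"
    using base moduli by simp
  ultimately have eval: "e < ?M * p 1 ^ m \<Longrightarrow>
      eval_gate (p 1) (input_gate p m (length x) e) x = gate_spec p m x 1 e" for e
    using eval_input_gate assms(3) by blast
  have "level p h m (length x) 1 = map (input_gate p m (length x)) [0..<?M * p 1 ^ m]"
    using base by (simp add: level_def)
  moreover have "level_values p h m (length x) x 1
      = map (\<lambda>g. eval_gate (p 1) g x) (level p h m (length x) 1)"
    using level_values_Suc[of p h m "length x" x 0] by (simp add: level_values_def)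
  ultimately show ?case
    using eval by simp
next
  case (Suc k)
  let ?M = "m ^ (h - 1 - Suc k)"
  let ?v = "level_values p h m (length x) x k"
  have "m ^ (h - 1 - k) = ?M * m"
    using Suc.prems power_minus_mult[of "h - 1 - k" m] by simp
  then have v: "length ?v = ?M * m * p k ^ m" "\<And>j. j < length ?v \<Longrightarrow> ?v ! j = gate_spec p m x k j"
    using Suc by auto
  have "p k \<ge> 2" "p (Suc k) \<ge> 2" "coprime (p k) (p (Suc k))"
    using Suc moduli coprime by auto
  note eval = eval_inner_gate[OF this assms(3) \<open>1 \<le> k\<close> v]
  have "level p h m (length x) (Suc k) = map (inner_gate p m (Suc k)) [0..<?M * p (Suc k) ^ m]"
    using Suc by (simp add: level_def)
  then show ?case
    by (simp add: level_values_Suc eval)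
qed

lemma AND_circuit_computes_AND:
  assumes moduli: "\<forall>i\<in>{1..h}. p i \<ge> 2" and coprime: "\<forall>i\<in>{1..<h}. coprime (p i) (p (i + 1))"
    and "h \<ge> 2" and "m > 0" and "n \<le> m ^ (h - 1)"
  shows "computes_AND (map p [1..<h + 1]) (AND_circuit p h m n) n"
  unfolding computes_AND_def
proof (intro allI impI)
  fix x :: "bool list"
  assume "length x = n"
  obtain k where h: "h = Suc k" and "k \<ge> 1"
    using \<open>h \<ge> 2\<close> by (cases h) auto
  let ?v = "level_values p h m n x k"
  have "p k \<ge> 2" "p (Suc k) \<ge> 2" "coprime (p k) (p (Suc k))"
    using moduli coprime h \<open>k \<ge> 1\<close> by auto
  moreover have "length ?v = p k ^ m" "\<And>j. j < length ?v \<Longrightarrow> ?v ! j = gate_spec p m x k j"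
    using level_values_gate_spec[OF moduli coprime \<open>m > 0\<close>, of x k] \<open>length x = n\<close> assms(5) h \<open>k \<ge> 1\<close>
    by auto
  ultimately have "eval_gate (p (Suc k)) output_gate ?v \<longleftrightarrow> (\<forall>b\<in>set x. b)"
    using eval_output_gate \<open>m > 0\<close> \<open>k \<ge> 1\<close> \<open>length x = n\<close> assms(5) h by simp
  then show "circuit_output (map p [1..<h + 1]) (AND_circuit p h m n) x \<longleftrightarrow> (\<forall>b\<in>set x. b)"
    using circuit_output_AND_circuit[of h p m n x] h by simp
qed

lemma accepting_set_level:
  assumes "p k > 0" and "g \<in> set (level p h m n k)"
  shows "fst g \<subseteq> {..<p k}"
  using assms by (auto simp: level_def input_gate_def inner_gate_def output_gate_def split: if_splits)

lemma level_ne_Nil: "m > 0 \<Longrightarrow> p k > 0 \<Longrightarrow> level p h m n k \<noteq> []"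
  by (simp add: level_def)

lemma is_CC_circuit_AND_circuit:
  assumes "\<forall>i\<in>{1..h}. p i > 0" and "h \<ge> 1" and "m > 0"
  shows "is_CC_circuit (map p [1..<h + 1]) (AND_circuit p h m n)"
proof -
  have "AND_circuit p h m n ! i = level p h m n (Suc i)" "map p [1..<h + 1] ! i = p (Suc i)"
    "p (Suc i) > 0" if "i < h" for i
    using that assms(1) by (simp_all add: AND_circuit_def nth_upt del: upt_Suc)
  moreover have "last (AND_circuit p h m n) = [output_gate]"
    using assms(2) by (simp add: AND_circuit_def last_map level_def del: upt_Suc)
  moreover have "length (AND_circuit p h m n) = h"
    by (simp add: AND_circuit_def)
  ultimately show ?thesis
    using assms(2,3) accepting_set_level level_ne_Nil
    unfolding is_CC_circuit_def by (auto simp del: upt_Suc)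
qed

section \<open>Size and asymptotics\<close>

lemma circuit_size_AND_circuit_le:
  assumes "\<forall>i\<in>{1..h}. p i \<le> P" and "m > 0" and "P > 0"
  shows "circuit_size (AND_circuit p h m n) \<le> h * m ^ h * P ^ m"
proof -
  have bound: "length (level p h m n k) \<le> m ^ h * P ^ m" if "k \<in> set [1..<h + 1]" for k
  proof (cases "k = h")
    case True
    then show ?thesis
      using assms(2,3) by (simp add: level_def)
  next
    case False
    have "m ^ (h - 1 - k) * p k ^ m \<le> m ^ h * P ^ m"
      using that assms by (intro mult_le_mono power_increasing power_mono) auto
    then show ?thesis
      using False by (simp add: level_def)
  qed
  have "circuit_size (AND_circuit p h m n) = (\<Sum>k\<leftarrow>[1..<h + 1]. length (level p h m n k))"
    by (simp add: circuit_size_def AND_circuit_def comp_def del: upt_Suc)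
  also have "\<dots> \<le> (\<Sum>k\<leftarrow>[1..<h + 1]. m ^ h * P ^ m)"
    using bound by (rule sum_list_mono)
  also have "\<dots> = h * m ^ h * P ^ m"
    by (simp add: sum_list_triv del: upt_Suc)
  finally show ?thesis .
qed

lemma mult_powers_le_two_power:
  fixes h m P :: nat
  assumes "m \<ge> 1"
  shows "h * m ^ h * P ^ m \<le> 2 ^ ((2 * h + P) * m)"
proof -
  have "h \<le> 2 ^ h"
    using less_exp[of h] by simp
  also have "\<dots> \<le> 2 ^ (h * m)"
    using assms by (intro power_increasing) auto
  finally have "h \<le> 2 ^ (h * m)" .
  moreover have "m ^ h \<le> 2 ^ (h * m)"
    using less_exp[of m] power_mono[of m "2 ^ m" h] by (simp add: power_mult[symmetric] mult.commute)
  moreover have "P ^ m \<le> 2 ^ (P * m)"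
    using less_exp[of P] power_mono[of P "2 ^ P" m] by (simp add: power_mult[symmetric])
  ultimately have "h * m ^ h * P ^ m \<le> 2 ^ (h * m) * 2 ^ (h * m) * 2 ^ (P * m)"
    by (intro mult_le_mono) auto
  also have "\<dots> = 2 ^ ((2 * h + P) * m)"
    by (simp add: power_add[symmetric] algebra_simps)
  finally show ?thesis .
qed

lemma obtain_nat_above_root:
  assumes "d \<ge> 1" and "n \<ge> 1"
  obtains m :: nat where "m \<ge> 1" and "n \<le> m ^ d" and "real m \<le> 2 * real n powr (1 / real d)"
proof
  define y where "y = real n powr (1 / real d)"
  have "y \<ge> 1"
    using assms(2) by (simp add: y_def ge_one_powr_ge_zero)
  have "y ^ d = real n"
    using assms by (simp add: y_def powr_realpow[symmetric] powr_powr)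
  show "real (nat \<lceil>y\<rceil>) \<le> 2 * real n powr (1 / real d)"
    using \<open>y \<ge> 1\<close> by (simp add: y_def[symmetric]) linarith
  show "nat \<lceil>y\<rceil> \<ge> 1"
    using \<open>y \<ge> 1\<close> real_nat_ceiling_ge[of y] by linarith
  have "real n \<le> real (nat \<lceil>y\<rceil>) ^ d"
    unfolding \<open>y ^ d = real n\<close>[symmetric] using \<open>y \<ge> 1\<close> by (intro power_mono) auto
  then show "n \<le> nat \<lceil>y\<rceil> ^ d"
    by (metis of_nat_le_iff of_nat_power)
qed

lemma exists_small_CC_circuit_AND:
  assumes moduli: "\<forall>i\<in>{1..h}. p i \<ge> 2" and coprime: "\<forall>i\<in>{1..<h}. coprime (p i) (p (i + 1))"
    and "h \<ge> 2" and bound: "\<forall>i\<in>{1..h}. p i \<le> P" and "n \<ge> 1"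
  shows "\<exists>C. is_CC_circuit (map p [1..<h + 1]) C \<and> computes_AND (map p [1..<h + 1]) C n \<and>
           real (circuit_size C) \<le> 2 powr (2 * real (2 * h + P) * real n powr (1 / real (h - 1)))"
proof -
  define K where "K = 2 * h + P"
  have "2 \<le> p 1" "p 1 \<le> P"
    using moduli bound \<open>h \<ge> 2\<close> by auto
  then have "P > 0"
    by linarith
  have "h - 1 \<ge> 1"
    using \<open>h \<ge> 2\<close> by simp
  then obtain m where m: "m \<ge> 1" "n \<le> m ^ (h - 1)" "real m \<le> 2 * real n powr (1 / real (h - 1))"
    using obtain_nat_above_root \<open>n \<ge> 1\<close> by blast
  have "circuit_size (AND_circuit p h m n) \<le> h * m ^ h * P ^ m"
    using bound \<open>P > 0\<close> m(1) by (intro circuit_size_AND_circuit_le) auto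
  also have "\<dots> \<le> 2 ^ (K * m)"
    unfolding K_def using m(1) by (rule mult_powers_le_two_power)
  finally have "real (circuit_size (AND_circuit p h m n)) \<le> 2 ^ (K * m)"
    by (metis of_nat_le_iff of_nat_numeral of_nat_power)
  also have "(2::real) ^ (K * m) = 2 powr (real K * real m)"
    using powr_realpow[of 2 "K * m"] by simp
  also have "\<dots> \<le> 2 powr (2 * real K * real n powr (1 / real (h - 1)))"
    using mult_left_mono[OF m(3), of "real K"] by (intro powr_mono) (auto simp: ac_simps)
  finally have "real (circuit_size (AND_circuit p h m n))
      \<le> 2 powr (2 * real K * real n powr (1 / real (h - 1)))" .
  moreover have "is_CC_circuit (map p [1..<h + 1]) (AND_circuit p h m n)"
    using moduli \<open>h \<ge> 2\<close> m(1) by (intro is_CC_circuit_AND_circuit) auto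
  moreover have "computes_AND (map p [1..<h + 1]) (AND_circuit p h m n) n"
    using moduli coprime \<open>h \<ge> 2\<close> m(1,2) by (intro AND_circuit_computes_AND) auto
  ultimately show ?thesis
    unfolding K_def by blast
qed

theorem proposition4p2:
  fixes h :: nat and p :: "nat \<Rightarrow> nat"
  assumes "h \<ge> 2"
    and "\<forall>i\<in>{1..h}. prime (p i)"
    and "\<forall>i\<in>{1..<h}. p i \<noteq> p (i + 1)"
  shows "\<exists>c::real. c > 0 \<and> (\<exists>N::nat. \<forall>n\<ge>N. \<exists>C.
           is_CC_circuit (map p [1..<h+1]) C \<and> computes_AND (map p [1..<h+1]) C n \<and>
           real (circuit_size C) \<le> 2 powr (c * real n powr (1 / real (h - 1))))"
proof -
  define P where "P = (\<Sum>i=1..h. p i)"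
  have moduli: "\<forall>i\<in>{1..h}. p i \<ge> 2"
    using assms(2) prime_ge_2_nat by blast
  have coprime: "\<forall>i\<in>{1..<h}. coprime (p i) (p (i + 1))"
    using assms(2,3) by (auto simp: primes_coprime)
  have "\<forall>i\<in>{1..h}. p i \<le> P"
    by (auto simp: P_def intro!: member_le_sum)
  then have "\<forall>n\<ge>1. \<exists>C. is_CC_circuit (map p [1..<h+1]) C \<and> computes_AND (map p [1..<h+1]) C n \<and>
      real (circuit_size C) \<le> 2 powr (2 * real (2 * h + P) * real n powr (1 / real (h - 1)))"
    using exists_small_CC_circuit_AND[OF moduli coprime assms(1)] by blast
  moreover have "2 * real (2 * h + P) > 0"
    using assms(1) by simp
  ultimately show ?thesis
    by blast
qed

end
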